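(* Let $n$ be a positive integer. (a) $\mu(n,2)=\lceil 2n/3\rceil$. (b) If $n\ge 2$, then $\mu^*(n,2)=2\lceil n/3\rceil$, and this is the least even integer not less than $\mu(n,2)$.
   Context: Let $\mathbb F_2=\{0,1\}$ be the field with two elements. For $u\in\mathbb F_2^n$, $|u|$ denotes the Hamming weight of $u$ (the number of entries equal to $1$). A wiring on $n$ vertices is a matrix $W=(w_{i,j})\in M(n,n;\mathbb F_2)$ with $w_{i,i}=1$ for all $i$ (pressing button $j$ toggles bulb $i$ iff $w_{i,j}=1$). The degree of vertex $j$ is the number of $1$s in the $j$th column of $W$, and $\deg(W)$ is the maximum degree over all vertices. For $c\in\mathbb F_2^n$ (initial configuration), $M(W,c)=\max\{|Wx+c| : x\in\mathbb F_2^n\}$. For $n,m\ge1$, $A(n,m)$ is the set of wirings on $n$ vertices with $\deg(W)\le m$; for $n\ge m$, $A^*(n,m)$ is the set of wirings on $n$ vertices in which every vertex has degree exactly $m$. Define $\mu(n,m)=\min\{M(W,0): W\in A(n,m)\}$ and, for $n\ge m$, $\mu^*(n,m)=\min\{M(W,0): W\in A^*(n,m)\}$. *)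

theory Defs
  imports Complex_Main
begin

text \<open>Vectors in F_2^n are functions nat => bool (only indices < n matter);
  a matrix W in M(n,n;F_2) is a function nat => nat => bool, W i j = w_{i,j}.\<close>

definition weight :: "nat \<Rightarrow> (nat \<Rightarrow> bool) \<Rightarrow> nat" where
  "weight n u = card {i. i < n \<and> u i}"

text \<open>(W x + c)_i over F_2: parity of sum_j w_ij x_j, xor c_i.\<close>
definition mat_apply :: "nat \<Rightarrow> (nat \<Rightarrow> nat \<Rightarrow> bool) \<Rightarrow> (nat \<Rightarrow> bool) \<Rightarrow> (nat \<Rightarrow> bool) \<Rightarrow> (nat \<Rightarrow> bool)" where
  "mat_apply n W x c = (\<lambda>i. odd (card {j. j < n \<and> W i j \<and> x j}) \<noteq> c i)"

definition is_wiring :: "nat \<Rightarrow> (nat \<Rightarrow> nat \<Rightarrow> bool) \<Rightarrow> bool" where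
  "is_wiring n W = (\<forall>i<n. W i i)"

definition vdeg :: "nat \<Rightarrow> (nat \<Rightarrow> nat \<Rightarrow> bool) \<Rightarrow> nat \<Rightarrow> nat" where
  "vdeg n W j = card {i. i < n \<and> W i j}"

definition wdeg :: "nat \<Rightarrow> (nat \<Rightarrow> nat \<Rightarrow> bool) \<Rightarrow> nat" where
  "wdeg n W = Max ((vdeg n W) ` {..<n})"

definition Mval :: "nat \<Rightarrow> (nat \<Rightarrow> nat \<Rightarrow> bool) \<Rightarrow> (nat \<Rightarrow> bool) \<Rightarrow> nat" where
  "Mval n W c = Max {weight n (mat_apply n W x c) | x. \<forall>j. n \<le> j \<longrightarrow> \<not> x j}"

definition Aset :: "nat \<Rightarrow> nat \<Rightarrow> (nat \<Rightarrow> nat \<Rightarrow> bool) set" where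
  "Aset n m = {W. is_wiring n W \<and> (\<forall>i j. (n \<le> i \<or> n \<le> j) \<longrightarrow> \<not> W i j) \<and> wdeg n W \<le> m}"

definition Astar :: "nat \<Rightarrow> nat \<Rightarrow> (nat \<Rightarrow> nat \<Rightarrow> bool) set" where
  "Astar n m = {W. is_wiring n W \<and> (\<forall>i j. (n \<le> i \<or> n \<le> j) \<longrightarrow> \<not> W i j) \<and> (\<forall>j<n. vdeg n W j = m)}"

definition mu :: "nat \<Rightarrow> nat \<Rightarrow> nat" where
  "mu n m = Min {Mval n W (\<lambda>_. False) | W. W \<in> Aset n m}"

definition mu_star :: "nat \<Rightarrow> nat \<Rightarrow> nat" where
  "mu_star n m = Min {Mval n W (\<lambda>_. False) | W. W \<in> Astar n m}"

end

theory Submission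
  imports Defs
begin

text \<open>
  In a wiring of degree at most two every button toggles its own bulb and at most one other.
  For the lower bound we show by induction on the number of vertices that some set of buttons
  lights two thirds of the bulbs. If the buttons of a set \<open>S\<close> toggle only bulbs in \<open>S\<close>, the other
  buttons just add an offset to the bulbs of \<open>S\<close>, so \<open>S\<close> can be handled last; for a single vertex,
  for suitable three vertices and for an isolated two-cycle enough bulbs of \<open>S\<close> can always be lit.
  Otherwise there is a path \<open>v \<rightarrow> u \<rightarrow> w\<close> (button \<open>v\<close> toggles bulb \<open>u\<close>, button \<open>u\<close> toggles
  bulb \<open>w\<close>) whose button \<open>w\<close> toggles neither \<open>v\<close> nor \<open>u\<close>. We remove \<open>v\<close> and \<open>u\<close>, let the
  buttons that toggled them toggle \<open>w\<close> instead, and afterwards light \<open>v\<close> and \<open>u\<close>, pressing \<open>u\<close>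
  exactly so as to reproduce the effect of the redirected buttons on \<open>w\<close>.
  For the upper bound, on a directed triangle at most two of the three bulbs are lit. If every
  button has degree exactly two, the number of lit bulbs is even, which gives \<open>2\<lceil>n/3\<rceil>\<close>; this is
  attained by triangles completed by a cycle of length four or two.
\<close>

text \<open>\<open>T i j\<close> means that button \<open>j\<close> toggles bulb \<open>i\<close> (the entry \<open>w\<^sub>i\<^sub>j\<close>); only the
  buttons and bulbs in \<open>V\<close> count, and \<open>X\<close> is the set of pressed buttons.\<close>
definition lit :: "nat set \<Rightarrow> (nat \<Rightarrow> nat \<Rightarrow> bool) \<Rightarrow> nat set \<Rightarrow> nat \<Rightarrow> bool" where
  "lit V T X i \<longleftrightarrow> odd (card {j\<in>V. T i j \<and> j \<in> X})"

definition num_lit :: "nat set \<Rightarrow> (nat \<Rightarrow> nat \<Rightarrow> bool) \<Rightarrow> nat set \<Rightarrow> nat" where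
  "num_lit V T X = card {i\<in>V. lit V T X i}"

definition deg2_wiring :: "nat set \<Rightarrow> (nat \<Rightarrow> nat \<Rightarrow> bool) \<Rightarrow> bool" where
  "deg2_wiring V T \<longleftrightarrow> finite V \<and> (\<forall>j\<in>V. T j j) \<and>
     (\<forall>j\<in>V. \<forall>a\<in>V. \<forall>b\<in>V. T a j \<longrightarrow> T b j \<longrightarrow> a = j \<or> b = j \<or> a = b)"

definition two_thirds_litable :: "nat set \<Rightarrow> (nat \<Rightarrow> nat \<Rightarrow> bool) \<Rightarrow> bool" where
  "two_thirds_litable V T \<longleftrightarrow> (\<exists>X\<subseteq>V. 2 * card V \<le> 3 * num_lit V T X)"

lemma deg2_wiring_finite: "deg2_wiring V T \<Longrightarrow> finite V"
  unfolding deg2_wiring_def by simp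

lemma deg2_wiring_self: "deg2_wiring V T \<Longrightarrow> j \<in> V \<Longrightarrow> T j j"
  unfolding deg2_wiring_def by simp

lemma deg2_wiring_subset: "deg2_wiring V T \<Longrightarrow> V' \<subseteq> V \<Longrightarrow> deg2_wiring V' T"
  unfolding deg2_wiring_def by (meson finite_subset subsetD)

lemma deg2_wiring_toggles_iff:
  assumes "deg2_wiring V T" "j \<in> V" "a \<in> V" "a \<noteq> j" "T a j" "i \<in> V"
  shows "T i j \<longleftrightarrow> i = j \<or> i = a"
  using assms unfolding deg2_wiring_def by metis

lemma odd_card_Un_disjoint:
  "finite A \<Longrightarrow> finite B \<Longrightarrow> A \<inter> B = {} \<Longrightarrow> odd (card (A \<union> B)) \<longleftrightarrow> odd (card A) \<noteq> odd (card B)"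
  by (simp add: card_Un_disjoint)

lemma lit_Un:
  assumes "finite V" "S \<subseteq> V" "X \<subseteq> V - S" "Y \<subseteq> S"
  shows "lit V T (X \<union> Y) i \<longleftrightarrow> lit (V - S) T X i \<noteq> lit S T Y i"
proof -
  have "{j\<in>V. T i j \<and> j \<in> X \<union> Y} = {j\<in>V - S. T i j \<and> j \<in> X} \<union> {j\<in>S. T i j \<and> j \<in> Y}"
    using assms by auto
  moreover have "finite S" using assms finite_subset by blast
  ultimately show ?thesis
    unfolding lit_def using assms by (subst odd_card_Un_disjoint[symmetric]) auto
qed

lemma odd_card_filter_doubleton:
  assumes "a \<noteq> b"
  shows "odd (card {j\<in>{a, b}. P j}) \<longleftrightarrow> P a \<noteq> P b"
proof -
  have "{j\<in>{a, b}. P j} = (if P a then {a} else {}) \<union> (if P b then {b} else {})"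
    by auto
  then show ?thesis using assms by simp
qed

lemma lit_doubleton:
  assumes "a \<noteq> b" "{a, b} \<subseteq> S" "Y \<subseteq> {a, b}"
  shows "lit S T Y i \<longleftrightarrow> (T i a \<and> a \<in> Y) \<noteq> (T i b \<and> b \<in> Y)"
proof -
  have "{j\<in>S. T i j \<and> j \<in> Y} = {j\<in>{a, b}. T i j \<and> j \<in> Y}"
    using assms by auto
  then show ?thesis
    unfolding lit_def using odd_card_filter_doubleton[OF assms(1)] by simp
qed

lemma num_lit_split:
  assumes "finite V" "S \<subseteq> V"
  shows "num_lit V T X = card {i\<in>V - S. lit V T X i} + card {i\<in>S. lit V T X i}"
proof -
  have "{i\<in>V. lit V T X i} = {i\<in>V - S. lit V T X i} \<union> {i\<in>S. lit V T X i}"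
    using assms(2) by auto
  moreover have "finite {i\<in>V - S. lit V T X i}" "finite {i\<in>S. lit V T X i}"
    using assms by (auto intro: finite_subset)
  ultimately show ?thesis
    unfolding num_lit_def by (subst card_Un_disjoint[symmetric]) auto
qed

lemma two_thirds_litable_combine:
  assumes fin: "finite V" and S: "S \<subseteq> V" and X: "X \<subseteq> V - S" and Y: "Y \<subseteq> S"
    and outside: "\<And>i. i \<in> V - S \<Longrightarrow> lit V T (X \<union> Y) i \<longleftrightarrow> lit (V - S) T' X i"
    and outside_bound: "2 * card (V - S) \<le> 3 * num_lit (V - S) T' X"
    and inside_bound: "2 * card S \<le> 3 * card {i\<in>S. lit V T (X \<union> Y) i}"
  shows "two_thirds_litable V T"
proof -
  have "{i\<in>V - S. lit V T (X \<union> Y) i} = {i\<in>V - S. lit (V - S) T' X i}"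
    using outside by auto
  then have "num_lit V T (X \<union> Y) = num_lit (V - S) T' X + card {i\<in>S. lit V T (X \<union> Y) i}"
    using num_lit_split[OF fin S] unfolding num_lit_def by simp
  moreover have "card V = card (V - S) + card S"
    using fin S by (simp add: card_Diff_subset card_mono finite_subset)
  ultimately have "2 * card V \<le> 3 * num_lit V T (X \<union> Y)"
    using outside_bound inside_bound by simp
  moreover have "X \<union> Y \<subseteq> V" using X Y S by auto
  ultimately show ?thesis unfolding two_thirds_litable_def by blast
qed

lemma light_singleton:
  assumes "a \<in> S" "T a a"
  shows "\<exists>Y\<subseteq>{a}. e \<noteq> lit S T Y a"
proof -
  have "lit S T {a} a" "\<not> lit S T {} a"
    using assms unfolding lit_def by (auto simp: Collect_conv_if)
  then show ?thesis by (cases e) blast+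
qed

text \<open>Button \<open>a\<close> does not toggle bulb \<open>b\<close>: decide first on \<open>b\<close> to light bulb \<open>b\<close>, then on \<open>a\<close>.\<close>
lemma light_pair:
  assumes "a \<noteq> b" "{a, b} \<subseteq> S" "T a a" "T b b" "\<not> T b a"
  shows "\<exists>Y\<subseteq>{a, b}. e a \<noteq> lit S T Y a \<and> e b \<noteq> lit S T Y b"
proof -
  define Y where "Y = {j\<in>{a, b}. (j = b \<and> \<not> e b) \<or> (j = a \<and> e a = (T a b \<and> \<not> e b))}"
  have Y: "Y \<subseteq> {a, b}" unfolding Y_def by auto
  have "a \<in> Y \<longleftrightarrow> e a = (T a b \<and> \<not> e b)" "b \<in> Y \<longleftrightarrow> \<not> e b"
    unfolding Y_def using assms(1) by auto
  then show ?thesis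
    using lit_doubleton[OF assms(1,2) Y, of T] assms Y by (intro exI[of _ Y]) auto
qed

text \<open>If the buttons of \<open>S\<close> toggle only bulbs in \<open>S\<close>, the buttons outside \<open>S\<close> merely add the
  offset \<open>lit (V - S) T X\<close> to the bulbs of \<open>S\<close>, so \<open>S\<close> can be handled last.\<close>
lemma two_thirds_litable_closed_piece:
  assumes fin: "finite V" and S: "S \<subseteq> V" and closed: "\<forall>j\<in>S. \<forall>i\<in>V. T i j \<longrightarrow> i \<in> S"
    and rest: "two_thirds_litable (V - S) T"
    and piece: "\<And>X. X \<subseteq> V - S \<Longrightarrow>
      \<exists>Y\<subseteq>S. 2 * card S \<le> 3 * card {i\<in>S. lit (V - S) T X i \<noteq> lit S T Y i}"
  shows "two_thirds_litable V T"
proof -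
  obtain X where X: "X \<subseteq> V - S" "2 * card (V - S) \<le> 3 * num_lit (V - S) T X"
    using rest unfolding two_thirds_litable_def by blast
  obtain Y where Y: "Y \<subseteq> S" "2 * card S \<le> 3 * card {i\<in>S. lit (V - S) T X i \<noteq> lit S T Y i}"
    using piece[OF X(1)] by blast
  have "\<not> lit S T Y i" if "i \<in> V - S" for i
  proof -
    have none: "{j\<in>S. T i j \<and> j \<in> Y} = {}" using closed that by auto
    show ?thesis unfolding lit_def none by simp
  qed
  then show ?thesis
    using two_thirds_litable_combine[OF fin S X(1) Y(1) _ X(2)] Y(2)
    by (simp add: lit_Un[OF fin S X(1) Y(1)])
qed

lemma two_thirds_litable_root:
  assumes g: "deg2_wiring V T" and r: "r \<in> V" "\<forall>i\<in>V. T i r \<longrightarrow> i = r"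
    and rest: "two_thirds_litable (V - {r}) T"
  shows "two_thirds_litable V T"
proof (rule two_thirds_litable_closed_piece[OF deg2_wiring_finite[OF g] _ _ rest])
  fix X
  obtain Y where "Y \<subseteq> {r}" "lit (V - {r}) T X r \<noteq> lit {r} T Y r"
    using light_singleton[of r "{r}" T] deg2_wiring_self[OF g r(1)] by blast
  then show "\<exists>Y\<subseteq>{r}. 2 * card {r} \<le> 3 * card {i\<in>{r}. lit (V - {r}) T X i \<noteq> lit {r} T Y i}"
    by (intro exI[of _ Y]) (simp add: Collect_conv_if)
qed (use r in auto)

lemma two_thirds_litable_triple:
  assumes g: "deg2_wiring V T" and S: "{a, b, c} \<subseteq> V" and "a \<noteq> b" "\<not> T b a"
    and closed: "\<forall>j\<in>{a, b, c}. \<forall>i\<in>V. T i j \<longrightarrow> i \<in> {a, b, c}"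
    and rest: "two_thirds_litable (V - {a, b, c}) T"
  shows "two_thirds_litable V T"
proof (rule two_thirds_litable_closed_piece[OF deg2_wiring_finite[OF g] S closed rest])
  fix X
  have "T a a" "T b b" using deg2_wiring_self[OF g] S by auto
  then obtain Y where Y: "Y \<subseteq> {a, b}"
    "lit (V - {a, b, c}) T X a \<noteq> lit {a, b, c} T Y a" "lit (V - {a, b, c}) T X b \<noteq> lit {a, b, c} T Y b"
    using light_pair[of a b "{a, b, c}" T "lit (V - {a, b, c}) T X"] assms(3,4) by blast
  have "card {a, b} \<le> card {i\<in>{a, b, c}. lit (V - {a, b, c}) T X i \<noteq> lit {a, b, c} T Y i}"
    using Y by (intro card_mono) auto
  moreover have "card {a, b, c} \<le> 3" "card {a, b} = 2"
    using \<open>a \<noteq> b\<close> by (auto simp: card_insert_if)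
  ultimately show "\<exists>Y\<subseteq>{a, b, c}.
      2 * card {a, b, c} \<le> 3 * card {i\<in>{a, b, c}. lit (V - {a, b, c}) T X i \<noteq> lit {a, b, c} T Y i}"
    using Y(1) by (intro exI[of _ Y]) auto
qed

lemma two_thirds_litable_isolated_two_cycle:
  assumes g: "deg2_wiring V T" and V: "v \<in> V" "u \<in> V" "v \<noteq> u" and edges: "T u v" "T v u"
    and isolated: "\<forall>j\<in>V - {v, u}. \<not> T v j \<and> \<not> T u j"
    and rest: "two_thirds_litable (V - {v, u}) T"
  shows "two_thirds_litable V T"
proof (rule two_thirds_litable_closed_piece[OF deg2_wiring_finite[OF g] _ _ rest])
  fix X
  have "\<not> lit (V - {v, u}) T X i" if "i \<in> {v, u}" for i
  proof -
    have "{j\<in>V - {v, u}. T i j \<and> j \<in> X} = {}" using isolated that by auto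
    then show ?thesis unfolding lit_def by (metis card.empty even_zero)
  qed
  moreover have "lit {v, u} T {v} i" if "i \<in> {v, u}" for i
  proof -
    have "{j\<in>{v, u}. T i j \<and> j \<in> {v}} = {v}"
      using that deg2_wiring_self[OF g V(1)] edges(1) by auto
    then show ?thesis unfolding lit_def by simp
  qed
  ultimately have "{i\<in>{v, u}. lit (V - {v, u}) T X i \<noteq> lit {v, u} T {v} i} = {v, u}"
    by auto
  then show "\<exists>Y\<subseteq>{v, u}.
      2 * card {v, u} \<le> 3 * card {i\<in>{v, u}. lit (V - {v, u}) T X i \<noteq> lit {v, u} T Y i}"
    by (intro exI[of _ "{v}"]) auto
next
  have "T i v \<longleftrightarrow> i = v \<or> i = u" "T i u \<longleftrightarrow> i = u \<or> i = v" if "i \<in> V" for i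
    using deg2_wiring_toggles_iff[OF g V(1) V(2) _ edges(1) that]
      deg2_wiring_toggles_iff[OF g V(2) V(1) _ edges(2) that] V by auto
  then show "\<forall>j\<in>{v, u}. \<forall>i\<in>V. T i j \<longrightarrow> i \<in> {v, u}" by auto
qed (use V in auto)

definition retarget :: "(nat \<Rightarrow> nat \<Rightarrow> bool) \<Rightarrow> nat \<Rightarrow> nat \<Rightarrow> nat \<Rightarrow> nat \<Rightarrow> nat \<Rightarrow> bool" where
  "retarget T v u w i j \<longleftrightarrow> (if T v j \<or> T u j then i = j \<or> i = w else T i j)"

lemma deg2_wiring_retarget:
  "deg2_wiring V T \<Longrightarrow> deg2_wiring (V - {v, u}) (retarget T v u w)"
  unfolding deg2_wiring_def retarget_def by auto

lemma lit_retarget: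
  assumes g: "deg2_wiring V T" and "v \<in> V" "u \<in> V" "v \<noteq> u"
    and w: "w \<in> V - {v, u}" "\<not> T v w" "\<not> T u w" and i: "i \<in> V - {v, u}"
  shows "lit (V - {v, u}) (retarget T v u w) X i \<longleftrightarrow>
    lit (V - {v, u}) T X i \<noteq> (i = w \<and> (lit (V - {v, u}) T X v \<noteq> lit (V - {v, u}) T X u))"
proof -
  define V' where "V' = V - {v, u}"
  have fin: "finite V'" using deg2_wiring_finite[OF g] unfolding V'_def by simp
  have only_self: "T k j \<longleftrightarrow> k = j" if "j \<in> V'" "T v j \<or> T u j" "k \<in> V'" for j k
    using that deg2_wiring_toggles_iff[OF g, of j v k] deg2_wiring_toggles_iff[OF g, of j u k]
      assms(2-4) unfolding V'_def by blast
  show ?thesis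
  proof (cases "i = w")
    case False
    have "{j\<in>V'. retarget T v u w i j \<and> j \<in> X} = {j\<in>V'. T i j \<and> j \<in> X}"
      using only_self i False unfolding retarget_def V'_def by auto
    then show ?thesis using False unfolding lit_def V'_def by simp
  next
    case True
    define A where "A = {j\<in>V'. T w j \<and> j \<in> X}"
    define Bv where "Bv = {j\<in>V'. T v j \<and> j \<in> X}"
    define Bu where "Bu = {j\<in>V'. T u j \<and> j \<in> X}"
    have "{j\<in>V'. retarget T v u w w j \<and> j \<in> X} = A \<union> (Bv \<union> Bu)"
      using only_self w unfolding retarget_def A_def Bv_def Bu_def V'_def by auto
    moreover have "A \<inter> (Bv \<union> Bu) = {}"
      using only_self w unfolding A_def Bv_def Bu_def V'_def by blast
    moreover have "Bv \<inter> Bu = {}"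
      using g assms(2-4) unfolding Bv_def Bu_def V'_def deg2_wiring_def by blast
    ultimately show ?thesis
      using True fin unfolding lit_def V'_def[symmetric] A_def[symmetric] Bv_def[symmetric] Bu_def[symmetric]
      by (simp add: odd_card_Un_disjoint A_def Bv_def Bu_def)
  qed
qed

text \<open>Removing \<open>v \<rightarrow> u \<rightarrow> w\<close> (button \<open>v\<close> toggles \<open>u\<close>, button \<open>u\<close> toggles \<open>w\<close>): the
  buttons that toggled \<open>v\<close> or \<open>u\<close> are retargeted to \<open>w\<close>. Given a good choice for the
  smaller wiring, press \<open>v\<close> if needed to light \<open>v\<close>, and press \<open>u\<close> exactly when an odd number
  of retargeted buttons is pressed: this lights \<open>u\<close> and reproduces their effect on \<open>w\<close>.\<close>
lemma two_thirds_litable_retarget: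
  assumes g: "deg2_wiring V T" and V: "v \<in> V" "u \<in> V" "w \<in> V"
    and distinct: "v \<noteq> u" "u \<noteq> w" "v \<noteq> w"
    and edges: "T u v" "T w u" "\<not> T u w" "\<not> T v w"
    and smaller: "two_thirds_litable (V - {v, u}) (retarget T v u w)"
  shows "two_thirds_litable V T"
proof -
  define V' where "V' = V - {v, u}"
  have fin: "finite V" by (rule deg2_wiring_finite[OF g])
  have vu: "{v, u} \<subseteq> V" using V by simp
  obtain X where X: "X \<subseteq> V'" "2 * card V' \<le> 3 * num_lit V' (retarget T v u w) X"
    using smaller unfolding two_thirds_litable_def V'_def by blast
  define cv where "cv = lit V' T X v"
  define cu where "cu = lit V' T X u"
  define Y where "Y = {j\<in>{v, u}. (j = v \<and> \<not> cv) \<or> (j = u \<and> cv \<noteq> cu)}"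
  have Y: "Y \<subseteq> {v, u}" unfolding Y_def by auto
  have lit_XY: "lit V T (X \<union> Y) i \<longleftrightarrow> lit V' T X i \<noteq> ((T i v \<and> v \<in> Y) \<noteq> (T i u \<and> u \<in> Y))" for i
    using lit_Un[OF fin vu X(1)[unfolded V'_def] Y] lit_doubleton[OF distinct(1) subset_refl Y]
    unfolding V'_def by simp
  have col_v: "T i v \<longleftrightarrow> i = v \<or> i = u" if "i \<in> V" for i
    using deg2_wiring_toggles_iff[OF g V(1) V(2) _ edges(1) that] distinct by auto
  have col_u: "T i u \<longleftrightarrow> i = u \<or> i = w" if "i \<in> V" for i
    using deg2_wiring_toggles_iff[OF g V(2) V(3) _ edges(2) that] distinct by auto
  have w: "w \<in> V - {v, u}" using V distinct by auto
  have inside: "{i\<in>{v, u}. lit V T (X \<union> Y) i} = {v, u}"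
    using lit_XY[of v] lit_XY[of u] col_v col_u V distinct
    unfolding Y_def cv_def[symmetric] cu_def[symmetric] by auto
  have outside: "lit V T (X \<union> Y) i \<longleftrightarrow> lit V' (retarget T v u w) X i" if "i \<in> V'" for i
    using lit_XY[of i] lit_retarget[OF g V(1,2) distinct(1) w edges(4,3) that[unfolded V'_def]] that
      col_v[of i] col_u[of i] V distinct
    unfolding Y_def cv_def cu_def V'_def by auto
  show ?thesis
  proof (rule two_thirds_litable_combine[OF fin vu X(1)[unfolded V'_def] Y])
    show "lit V T (X \<union> Y) i \<longleftrightarrow> lit (V - {v, u}) (retarget T v u w) X i" if "i \<in> V - {v, u}" for i
      using outside that unfolding V'_def by blast
    show "2 * card (V - {v, u}) \<le> 3 * num_lit (V - {v, u}) (retarget T v u w) X"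
      using X(2) unfolding V'_def .
    show "2 * card {v, u} \<le> 3 * card {i\<in>{v, u}. lit V T (X \<union> Y) i}"
      unfolding inside by simp
  qed
qed

lemma two_thirds_litable_two_cycle:
  assumes g: "deg2_wiring V T" and V: "v \<in> V" "u \<in> V" "v \<noteq> u" and edges: "T u v" "T v u"
    and rest: "\<And>S. S \<subseteq> V \<Longrightarrow> S \<noteq> {} \<Longrightarrow> two_thirds_litable (V - S) T"
  shows "two_thirds_litable V T"
proof (cases "\<exists>j\<in>V - {v, u}. T v j \<or> T u j")
  case True
  then obtain j where j: "j \<in> V" "j \<noteq> v" "j \<noteq> u" "T v j \<or> T u j" by blast
  have "T i v \<longleftrightarrow> i = v \<or> i = u" "T i u \<longleftrightarrow> i = u \<or> i = v" if "i \<in> V" for i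
    using deg2_wiring_toggles_iff[OF g V(1) V(2) _ edges(1) that]
      deg2_wiring_toggles_iff[OF g V(2) V(1) _ edges(2) that] V(3) by auto
  moreover have "T i j \<longrightarrow> i \<in> {v, j, u}" if "i \<in> V" for i
    using deg2_wiring_toggles_iff[OF g j(1) V(1) _ _ that]
      deg2_wiring_toggles_iff[OF g j(1) V(2) _ _ that] j by auto
  ultimately show ?thesis
    using V j rest[of "{v, j, u}"] by (intro two_thirds_litable_triple[OF g, of v j u]) auto
next
  case False
  then show ?thesis
    using two_thirds_litable_isolated_two_cycle[OF g V edges] rest[of "{v, u}"] V by auto
qed

lemma two_thirds_litable_path:
  assumes g: "deg2_wiring V T" and V: "v \<in> V" "u \<in> V" "w \<in> V"
    and distinct: "v \<noteq> u" "u \<noteq> w" "v \<noteq> w" and edges: "T u v" "T w u"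
    and smaller: "\<And>S T'. S \<subseteq> V \<Longrightarrow> S \<noteq> {} \<Longrightarrow> deg2_wiring (V - S) T' \<Longrightarrow>
      two_thirds_litable (V - S) T'"
  shows "two_thirds_litable V T"
proof (cases "T u w \<or> T v w")
  case True
  have "T i v \<longleftrightarrow> i = v \<or> i = u" "T i u \<longleftrightarrow> i = u \<or> i = w" if "i \<in> V" for i
    using deg2_wiring_toggles_iff[OF g V(1) V(2) _ edges(1) that]
      deg2_wiring_toggles_iff[OF g V(2) V(3) _ edges(2) that] distinct by auto
  moreover have "T i w \<longrightarrow> i \<in> {v, w, u}" if "i \<in> V" for i
    using deg2_wiring_toggles_iff[OF g V(3) V(1) _ _ that]
      deg2_wiring_toggles_iff[OF g V(3) V(2) _ _ that] True distinct by auto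
  ultimately show ?thesis
    using V distinct smaller[of "{v, w, u}" T] deg2_wiring_subset[OF g Diff_subset]
    by (intro two_thirds_litable_triple[OF g, of v w u]) auto
next
  case False
  then show ?thesis
    using two_thirds_litable_retarget[OF g V distinct edges] smaller[of "{v, u}"]
      deg2_wiring_retarget[OF g] V by auto
qed

theorem two_thirds_litable_if_deg2_wiring:
  "deg2_wiring V T \<Longrightarrow> two_thirds_litable V T"
proof (induction "card V" arbitrary: V T rule: less_induct)
  case less
  note g = less.prems
  have smaller: "two_thirds_litable (V - S) T'"
    if "S \<subseteq> V" "S \<noteq> {}" "deg2_wiring (V - S) T'" for S T'
  proof -
    have "card (V - S) < card V"
      using that deg2_wiring_finite[OF g] by (intro psubset_card_mono) auto
    then show ?thesis using less.hyps that(3) by blast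
  qed
  have rest: "two_thirds_litable (V - S) T" if "S \<subseteq> V" "S \<noteq> {}" for S
    using smaller[OF that deg2_wiring_subset[OF g Diff_subset]] .
  consider (empty) "V = {}"
    | (root) r where "r \<in> V" "\<forall>i\<in>V. T i r \<longrightarrow> i = r"
    | (no_root) v where "v \<in> V" "\<forall>r\<in>V. \<exists>i\<in>V. i \<noteq> r \<and> T i r"
    by blast
  then show ?case
  proof cases
    case empty
    then show ?thesis unfolding two_thirds_litable_def by simp
  next
    case root
    then show ?thesis using two_thirds_litable_root[OF g] rest[of "{r}"] by blast
  next
    case no_root
    obtain u where u: "u \<in> V" "u \<noteq> v" "T u v" using no_root by blast
    obtain w where w: "w \<in> V" "w \<noteq> u" "T w u" using no_root(2) u(1) by blast
    show ?thesis
    proof (cases "w = v")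
      case True
      then show ?thesis
        using two_thirds_litable_two_cycle[OF g no_root(1) u(1) u(2)[symmetric] u(3)] w(3) rest
        by blast
    next
      case False
      then show ?thesis
        using two_thirds_litable_path[OF g no_root(1) u(1) w(1) u(2)[symmetric] w(2)[symmetric] _
            u(3) w(3) smaller]
        by blast
    qed
  qed
qed

lemma weight_le: "weight n u \<le> n"
  unfolding weight_def by (rule order_trans[OF card_mono[of "{..<n}"]]) auto

lemma finite_Mval_values: "finite {weight n (mat_apply n W x c) | x. \<forall>j. n \<le> j \<longrightarrow> \<not> x j}"
  by (rule finite_subset[of _ "{..n}"]) (auto simp: weight_le)

lemma Mval_ge: "\<forall>j. n \<le> j \<longrightarrow> \<not> x j \<Longrightarrow> weight n (mat_apply n W x c) \<le> Mval n W c"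
  unfolding Mval_def by (rule Max_ge[OF finite_Mval_values]) blast

lemma Mval_attained: "\<exists>x. (\<forall>j. n \<le> j \<longrightarrow> \<not> x j) \<and> Mval n W c = weight n (mat_apply n W x c)"
proof -
  have "Mval n W c \<in> {weight n (mat_apply n W x c) | x. \<forall>j. n \<le> j \<longrightarrow> \<not> x j}"
    unfolding Mval_def by (rule Max_in[OF finite_Mval_values]) blast
  then show ?thesis by blast
qed

lemma Mval_le: "Mval n W c \<le> n"
  using Mval_attained[of n W c] weight_le by metis

lemma finite_Mval_set: "finite {Mval n W c | W. W \<in> A}"
  by (rule finite_subset[of _ "{..n}"]) (auto simp: Mval_le)

lemma mu_le: "W \<in> Aset n m \<Longrightarrow> mu n m \<le> Mval n W (\<lambda>_. False)"
  unfolding mu_def by (rule Min_le[OF finite_Mval_set]) blast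

lemma mu_attained: "Aset n m \<noteq> {} \<Longrightarrow> \<exists>W\<in>Aset n m. mu n m = Mval n W (\<lambda>_. False)"
proof -
  assume "Aset n m \<noteq> {}"
  then have "mu n m \<in> {Mval n W (\<lambda>_. False) | W. W \<in> Aset n m}"
    unfolding mu_def by (intro Min_in[OF finite_Mval_set]) auto
  then show ?thesis by blast
qed

lemma mu_star_le: "W \<in> Astar n m \<Longrightarrow> mu_star n m \<le> Mval n W (\<lambda>_. False)"
  unfolding mu_star_def by (rule Min_le[OF finite_Mval_set]) blast

lemma mu_star_attained: "Astar n m \<noteq> {} \<Longrightarrow> \<exists>W\<in>Astar n m. mu_star n m = Mval n W (\<lambda>_. False)"
proof -
  assume "Astar n m \<noteq> {}"
  then have "mu_star n m \<in> {Mval n W (\<lambda>_. False) | W. W \<in> Astar n m}"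
    unfolding mu_star_def by (intro Min_in[OF finite_Mval_set]) auto
  then show ?thesis by blast
qed

lemma Astar_subset_Aset:
  assumes "1 \<le> n"
  shows "Astar n m \<subseteq> Aset n m"
proof
  fix W assume W: "W \<in> Astar n m"
  have "vdeg n W ` {..<n} = {m}"
    using W assms unfolding Astar_def by force
  then have "wdeg n W = m" unfolding wdeg_def by simp
  then show "W \<in> Aset n m" using W unfolding Astar_def Aset_def by simp
qed

lemma weight_eq_num_lit: "weight n (mat_apply n W (\<lambda>j. j \<in> X) (\<lambda>_. False)) = num_lit {..<n} W X"
proof -
  have "{j. j < n \<and> W i j \<and> j \<in> X} = {j\<in>{..<n}. W i j \<and> j \<in> X}" for i by auto
  then show ?thesis
    unfolding weight_def mat_apply_def num_lit_def lit_def by (simp add: lessThan_def conj_commute)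
qed

lemma deg2_wiring_if_Aset:
  assumes "W \<in> Aset n 2"
  shows "deg2_wiring {..<n} W"
  unfolding deg2_wiring_def
proof (intro conjI ballI impI)
  have diag: "\<forall>i<n. W i i" and deg: "wdeg n W \<le> 2"
    using assms unfolding Aset_def is_wiring_def by auto
  then show "W j j" if "j \<in> {..<n}" for j using that by simp
  fix j a b assume j: "j \<in> {..<n}" and ab: "a \<in> {..<n}" "b \<in> {..<n}" "W a j" "W b j"
  show "a = j \<or> b = j \<or> a = b"
  proof (rule ccontr)
    assume "\<not> (a = j \<or> b = j \<or> a = b)"
    then have "card {a, b, j} = 3" by auto
    moreover have "card {a, b, j} \<le> vdeg n W j"
      unfolding vdeg_def using j ab diag by (intro card_mono) auto
    moreover have "vdeg n W j \<le> wdeg n W"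
      unfolding wdeg_def using j by (intro Max_ge) auto
    ultimately show False using deg by simp
  qed
qed simp

lemma Mval_lower_bound:
  assumes "W \<in> Aset n 2"
  shows "2 * n \<le> 3 * Mval n W (\<lambda>_. False)"
proof -
  obtain X where X: "X \<subseteq> {..<n}" "2 * card {..<n} \<le> 3 * num_lit {..<n} W X"
    using two_thirds_litable_if_deg2_wiring[OF deg2_wiring_if_Aset[OF assms]]
    unfolding two_thirds_litable_def by blast
  have "num_lit {..<n} W X \<le> Mval n W (\<lambda>_. False)"
    using Mval_ge[of n "\<lambda>j. j \<in> X" W "\<lambda>_. False"] X(1)
    unfolding weight_eq_num_lit by (meson lessThan_iff not_less subsetD)
  then show ?thesis using X(2) by simp
qed

lemma weight_even_if_vdeg_even:
  assumes "\<And>j. j < n \<Longrightarrow> even (vdeg n W j)"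
  shows "even (weight n (mat_apply n W x (\<lambda>_. False)))"
proof -
  define c where "c i = card {j\<in>{..<n}. W i j \<and> x j}" for i
  have count: "card {j\<in>A. P j} = (\<Sum>j\<in>A. if P j then 1 else 0)" if "finite A" for A and P :: "nat \<Rightarrow> bool"
    using that by (simp add: sum.If_cases Int_def)
  have "(\<Sum>i<n. c i) = (\<Sum>i<n. \<Sum>j<n. if W i j \<and> x j then 1 else 0)"
    unfolding c_def by (intro sum.cong refl count) simp
  also have "\<dots> = (\<Sum>j<n. \<Sum>i<n. if W i j \<and> x j then 1 else 0)"
    by (rule sum.swap)
  also have "\<dots> = (\<Sum>j<n. if x j then vdeg n W j else 0)"
  proof (intro sum.cong refl)
    fix j
    have "vdeg n W j = (\<Sum>i<n. if W i j then 1 else 0)"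
      unfolding vdeg_def using count[of "{..<n}" "\<lambda>i. W i j"] by simp
    then show "(\<Sum>i<n. if W i j \<and> x j then 1 else 0) = (if x j then vdeg n W j else 0)"
      by simp
  qed
  finally have "even (\<Sum>i<n. c i)"
    using assms by (auto intro!: dvd_sum)
  moreover have "weight n (mat_apply n W x (\<lambda>_. False)) = card {i\<in>{..<n}. odd (c i)}"
    unfolding weight_def mat_apply_def c_def by (simp add: lessThan_def conj_commute)
  ultimately show ?thesis by (simp add: even_sum_iff)
qed

lemma nat_div3_decomp:
  fixes n :: nat
  obtains q r where "n = 3 * q + r" "r < 3" "n div 3 = q" "n mod 3 = r"
  using that[of "n div 3" "n mod 3"] by simp

lemma nat_mod3_cases:
  fixes n :: nat
  obtains q where "n = 3 * q" | q where "n = 3 * q + 1" | q where "n = 3 * q + 2"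
proof -
  obtain q r where n: "n = 3 * q + r" "r < 3" by (rule nat_div3_decomp)
  then consider "r = 0" | "r = 1" | "r = 2" by linarith
  then show ?thesis using that n(1) by cases simp_all
qed

lemma two_thirds_le_iff: "n - n div 3 \<le> m \<longleftrightarrow> 2 * n \<le> 3 * (m::nat)"
  by (cases rule: nat_mod3_cases[of n]) (simp_all, linarith+)

lemma even_two_thirds_le_iff:
  assumes "even (m::nat)"
  shows "2 * n \<le> 3 * m \<longleftrightarrow> 2 * ((n + 2) div 3) \<le> m"
proof -
  obtain t where m: "m = 2 * t" using assms by blast
  show ?thesis unfolding m by (cases rule: nat_mod3_cases[of n]) (simp_all, presburger+)
qed

lemma Least_even_two_thirds: "(LEAST k::nat. even k \<and> n - n div 3 \<le> k) = 2 * ((n + 2) div 3)"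
proof (rule Least_equality)
  show "even (2 * ((n + 2) div 3)) \<and> n - n div 3 \<le> 2 * ((n + 2) div 3)"
    using even_two_thirds_le_iff[of "2 * ((n + 2) div 3)" n] by (simp add: two_thirds_le_iff)
  show "2 * ((n + 2) div 3) \<le> k" if "even k \<and> n - n div 3 \<le> k" for k
    using that even_two_thirds_le_iff[of k n] by (simp add: two_thirds_le_iff)
qed

lemma ceiling_two_thirds: "\<lceil>2 * real n / 3\<rceil> = int (n - n div 3)"
proof (rule ceiling_unique)
  show "real_of_int (int (n - n div 3)) - 1 < 2 * real n / 3"
    by (cases rule: nat_mod3_cases[of n]) simp_all
  show "2 * real n / 3 \<le> real_of_int (int (n - n div 3))"
    by (cases rule: nat_mod3_cases[of n]) simp_all
qed

lemma ceiling_third: "\<lceil>real n / 3\<rceil> = int ((n + 2) div 3)"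
proof (rule ceiling_unique)
  show "real_of_int (int ((n + 2) div 3)) - 1 < real n / 3"
    by (cases rule: nat_mod3_cases[of n]) simp_all
  show "real n / 3 \<le> real_of_int (int ((n + 2) div 3))"
    by (cases rule: nat_mod3_cases[of n]) simp_all
qed

definition rotate_triples :: "nat \<Rightarrow> nat" where
  "rotate_triples j = (if j mod 3 = 2 then j - 2 else j + 1)"

text \<open>The triangles of \<open>rotate_triples\<close> on \<open>{..<n}\<close>, except that the last four vertices form a
  cycle if \<open>n mod 3 = 1\<close> and the last two if \<open>n mod 3 = 2\<close>, so that no button leaves \<open>{..<n}\<close>.\<close>
definition rotate_blocks :: "nat \<Rightarrow> nat \<Rightarrow> nat" where
  "rotate_blocks n j =
    (if j = n - 1 then (if n mod 3 = 1 then n - 4 else if n mod 3 = 2 then n - 2 else n - 3)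
     else if n mod 3 = 1 \<and> j = n - 2 then n - 1
     else rotate_triples j)"

lemma rotate_triples_triangle:
  "(rotate_triples j = 3 * k \<longleftrightarrow> j = 3 * k + 2) \<and> (rotate_triples j = 3 * k + 1 \<longleftrightarrow> j = 3 * k) \<and>
   (rotate_triples j = 3 * k + 2 \<longleftrightarrow> j = 3 * k + 1)"
  unfolding rotate_triples_def by presburger

lemma rotate_blocks_bound:
  assumes "2 \<le> n" "j < n"
  shows "rotate_blocks n j < n \<and> rotate_blocks n j \<noteq> j"
proof -
  obtain q r where n: "n = 3 * q + r" "r < 3" "n mod 3 = r" by (rule nat_div3_decomp)
  show ?thesis
    using n assms unfolding rotate_blocks_def rotate_triples_def
    by (cases "r = 0"; cases "r = 1"; simp; arith)
qed

lemma rotate_blocks_triangle: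
  assumes "k < n div 3 - (if n mod 3 = 1 then 1 else 0)"
  shows "(rotate_blocks n j = 3 * k \<longleftrightarrow> j = 3 * k + 2) \<and> (rotate_blocks n j = 3 * k + 1 \<longleftrightarrow> j = 3 * k) \<and>
   (rotate_blocks n j = 3 * k + 2 \<longleftrightarrow> j = 3 * k + 1)"
proof -
  obtain q r where n: "n = 3 * q + r" "r < 3" and qr: "n div 3 = q" "n mod 3 = r"
    by (rule nat_div3_decomp)
  consider "j = n - 1" | "r = 1" "j = n - 2" | "j \<noteq> n - 1" "r \<noteq> 1 \<or> j \<noteq> n - 2" by blast
  then show ?thesis
  proof cases
    case 1
    then show ?thesis
      using n assms unfolding rotate_blocks_def qr by (cases "r = 0"; cases "r = 1"; simp; arith)
  next
    case 2
    then show ?thesis using n assms unfolding rotate_blocks_def qr by auto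
  next
    case 3
    then show ?thesis using rotate_triples_triangle unfolding rotate_blocks_def qr by auto
  qed
qed

definition graph_wiring :: "nat \<Rightarrow> (nat \<Rightarrow> nat) \<Rightarrow> nat \<Rightarrow> nat \<Rightarrow> bool" where
  "graph_wiring n g i j \<longleftrightarrow> i < n \<and> j < n \<and> (i = j \<or> i = g j)"

lemma vdeg_graph_wiring_le: "vdeg n (graph_wiring n g) j \<le> 2"
proof -
  have "vdeg n (graph_wiring n g) j \<le> card {j, g j}"
    unfolding vdeg_def graph_wiring_def by (intro card_mono) auto
  also have "\<dots> \<le> 2" by (simp add: card_insert_if)
  finally show ?thesis .
qed

lemma vdeg_graph_wiring_eq:
  assumes "j < n" "g j < n" "g j \<noteq> j"
  shows "vdeg n (graph_wiring n g) j = 2"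
proof -
  have "{i. i < n \<and> graph_wiring n g i j} = {j, g j}"
    using assms unfolding graph_wiring_def by auto
  then show ?thesis unfolding vdeg_def using assms(3) by simp
qed

lemma graph_wiring_in_Aset:
  assumes "1 \<le> n"
  shows "graph_wiring n g \<in> Aset n 2"
proof -
  have "wdeg n (graph_wiring n g) \<le> 2"
    unfolding wdeg_def using assms by (subst Max_le_iff) (auto simp: vdeg_graph_wiring_le lessThan_empty_iff)
  then show ?thesis unfolding Aset_def is_wiring_def by (simp add: graph_wiring_def)
qed

lemma graph_wiring_in_Astar:
  assumes "\<And>j. j < n \<Longrightarrow> g j < n \<and> g j \<noteq> j"
  shows "graph_wiring n g \<in> Astar n 2"
  using assms vdeg_graph_wiring_eq unfolding Astar_def is_wiring_def
  by (simp add: graph_wiring_def)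

text \<open>The bulbs \<open>3k, 3k + 1, 3k + 2\<close> show \<open>x(3k) + x(3k + 2)\<close>, \<open>x(3k + 1) + x(3k)\<close> and
  \<open>x(3k + 2) + x(3k + 1)\<close>, which sum to zero.\<close>
lemma graph_wiring_triangle_not_all_lit:
  fixes g :: "nat \<Rightarrow> nat" and x :: "nat \<Rightarrow> bool" and k n :: nat
  defines "b \<equiv> mat_apply n (graph_wiring n g) x (\<lambda>_. False)"
  assumes block: "3 * k + 2 < n"
    and triangle: "\<And>j. (g j = 3 * k \<longleftrightarrow> j = 3 * k + 2) \<and>
      (g j = 3 * k + 1 \<longleftrightarrow> j = 3 * k) \<and> (g j = 3 * k + 2 \<longleftrightarrow> j = 3 * k + 1)"
  shows "\<not> (b (3 * k) \<and> b (3 * k + 1) \<and> b (3 * k + 2))"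
proof -
  have "graph_wiring n g (3 * k) j \<longleftrightarrow> j = 3 * k \<or> j = 3 * k + 2"
    "graph_wiring n g (3 * k + 1) j \<longleftrightarrow> j = 3 * k + 1 \<or> j = 3 * k"
    "graph_wiring n g (3 * k + 2) j \<longleftrightarrow> j = 3 * k + 2 \<or> j = 3 * k + 1" if "j < n" for j
    using triangle[of j] block that unfolding graph_wiring_def by auto
  then have rows: "{j. j < n \<and> graph_wiring n g (3 * k) j \<and> x j} = {j\<in>{3 * k, 3 * k + 2}. x j}"
    "{j. j < n \<and> graph_wiring n g (3 * k + 1) j \<and> x j} = {j\<in>{3 * k + 1, 3 * k}. x j}"
    "{j. j < n \<and> graph_wiring n g (3 * k + 2) j \<and> x j} = {j\<in>{3 * k + 2, 3 * k + 1}. x j}"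
    using block by auto
  have distinct: "3 * k \<noteq> 3 * k + 2" "3 * k + 1 \<noteq> 3 * k" "3 * k + 2 \<noteq> 3 * k + 1" by simp_all
  have "b (3 * k) \<longleftrightarrow> x (3 * k) \<noteq> x (3 * k + 2)"
    unfolding b_def mat_apply_def rows(1) odd_card_filter_doubleton[OF distinct(1)] by simp
  moreover have "b (3 * k + 1) \<longleftrightarrow> x (3 * k + 1) \<noteq> x (3 * k)"
    unfolding b_def mat_apply_def rows(2) odd_card_filter_doubleton[OF distinct(2)] by simp
  moreover have "b (3 * k + 2) \<longleftrightarrow> x (3 * k + 2) \<noteq> x (3 * k + 1)"
    unfolding b_def mat_apply_def rows(3) odd_card_filter_doubleton[OF distinct(3)] by simp
  ultimately show ?thesis by blast
qed

lemma weight_graph_wiring_le: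
  assumes K: "3 * K \<le> n"
    and triangle: "\<And>k j. k < K \<Longrightarrow> (g j = 3 * k \<longleftrightarrow> j = 3 * k + 2) \<and>
      (g j = 3 * k + 1 \<longleftrightarrow> j = 3 * k) \<and> (g j = 3 * k + 2 \<longleftrightarrow> j = 3 * k + 1)"
  shows "weight n (mat_apply n (graph_wiring n g) x (\<lambda>_. False)) \<le> n - K"
proof -
  define b where "b = mat_apply n (graph_wiring n g) x (\<lambda>_. False)"
  define U where "U = {i. i < n \<and> \<not> b i}"
  have "{i. i < n \<and> b i} \<union> U = {..<n}" "{i. i < n \<and> b i} \<inter> U = {}"
    unfolding U_def by auto
  then have count: "weight n b + card U = n"
    unfolding weight_def by (metis card_Un_disjoint card_lessThan finite_Un finite_lessThan)
  define h where "h k = (if \<not> b (3 * k) then 3 * k else if \<not> b (3 * k + 1) then 3 * k + 1 else 3 * k + 2)"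
    for k
  have "h k \<in> U" if "k < K" for k
  proof -
    have "3 * k + 2 < n" using that K by linarith
    then show ?thesis
      using graph_wiring_triangle_not_all_lit[of k n g x] triangle[OF that]
      unfolding h_def U_def b_def by auto
  qed
  then have "h ` {..<K} \<subseteq> U" by auto
  moreover have "h k div 3 = k" for k unfolding h_def by auto
  then have "inj_on h {..<K}" by (metis inj_onI)
  then have "card (h ` {..<K}) = K" by (simp add: card_image)
  moreover have "finite U" unfolding U_def by simp
  ultimately have "K \<le> card U" by (metis card_mono)
  then show ?thesis using count unfolding b_def by linarith
qed

lemma rotate_blocks_in_Astar: "2 \<le> n \<Longrightarrow> graph_wiring n (rotate_blocks n) \<in> Astar n 2"
  by (rule graph_wiring_in_Astar) (use rotate_blocks_bound in blast)

lemma mu_2_le: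
  assumes "1 \<le> n"
  shows "mu n 2 \<le> n - n div 3"
proof -
  obtain x where "Mval n (graph_wiring n rotate_triples) (\<lambda>_. False) =
      weight n (mat_apply n (graph_wiring n rotate_triples) x (\<lambda>_. False))"
    using Mval_attained by blast
  also have "\<dots> \<le> n - n div 3"
  proof (rule weight_graph_wiring_le)
    show "3 * (n div 3) \<le> n" by simp
  qed (rule rotate_triples_triangle)
  finally show ?thesis using mu_le[OF graph_wiring_in_Aset[OF assms, of rotate_triples]] by linarith
qed

lemma mu_star_2_le:
  assumes "2 \<le> n"
  shows "mu_star n 2 \<le> 2 * ((n + 2) div 3)"
proof -
  define K where "K = n div 3 - (if n mod 3 = 1 then 1 else 0)"
  obtain x where "Mval n (graph_wiring n (rotate_blocks n)) (\<lambda>_. False) =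
      weight n (mat_apply n (graph_wiring n (rotate_blocks n)) x (\<lambda>_. False))"
    using Mval_attained by blast
  also have "\<dots> \<le> n - K"
  proof (rule weight_graph_wiring_le)
    show "3 * K \<le> n" unfolding K_def by linarith
  qed (use rotate_blocks_triangle in \<open>simp only: K_def\<close>)
  also have "\<dots> = 2 * ((n + 2) div 3)"
  proof -
    obtain q r where n: "n = 3 * q + r" "r < 3" "n div 3 = q" "n mod 3 = r"
      by (rule nat_div3_decomp)
    then have "(n + 2) div 3 = q + (if r = 0 then 0 else 1)" by auto
    then show ?thesis unfolding K_def using n assms by (cases "r = 0"; cases "r = 1"; simp; arith)
  qed
  finally show ?thesis using mu_star_le[OF rotate_blocks_in_Astar[OF assms]] by linarith
qed

lemma mu_2_lower_bound:
  assumes "1 \<le> n"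
  shows "2 * n \<le> 3 * mu n 2"
proof -
  obtain W where "W \<in> Aset n 2" "mu n 2 = Mval n W (\<lambda>_. False)"
    using mu_attained graph_wiring_in_Aset[OF assms] by blast
  then show ?thesis using Mval_lower_bound by simp
qed

lemma mu_star_2_lower_bound:
  assumes "1 \<le> n" "Astar n 2 \<noteq> {}"
  shows "even (mu_star n 2) \<and> 2 * n \<le> 3 * mu_star n 2"
proof -
  obtain W where W: "W \<in> Astar n 2" "mu_star n 2 = Mval n W (\<lambda>_. False)"
    using mu_star_attained[OF assms(2)] by blast
  have "W \<in> Aset n 2" using W(1) Astar_subset_Aset[OF assms(1)] by blast
  then have "2 * n \<le> 3 * mu_star n 2" using W(2) Mval_lower_bound by simp
  moreover obtain x where "Mval n W (\<lambda>_. False) = weight n (mat_apply n W x (\<lambda>_. False))"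
    using Mval_attained by blast
  moreover have "even (vdeg n W j)" if "j < n" for j using W(1) that unfolding Astar_def by simp
  ultimately show ?thesis using W(2) weight_even_if_vdeg_even by simp
qed

theorem theorem1p1:
  fixes n :: nat
  assumes "n \<ge> 1"
  shows "int (mu n 2) = \<lceil>2 * real n / 3\<rceil> \<and>
         (n \<ge> 2 \<longrightarrow> int (mu_star n 2) = 2 * \<lceil>real n / 3\<rceil> \<and>
           mu_star n 2 = (LEAST k::nat. even k \<and> mu n 2 \<le> k))"
proof -
  have "n - n div 3 \<le> mu n 2"
    using mu_2_lower_bound[OF assms] by (simp add: two_thirds_le_iff)
  then have mu: "mu n 2 = n - n div 3"
    using mu_2_le[OF assms] by simp
  have mu_star: "mu_star n 2 = 2 * ((n + 2) div 3)" if n: "n \<ge> 2"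
  proof -
    have "even (mu_star n 2)" "2 * n \<le> 3 * mu_star n 2"
      using mu_star_2_lower_bound[OF assms] rotate_blocks_in_Astar[OF n] by blast+
    then have "2 * ((n + 2) div 3) \<le> mu_star n 2"
      using even_two_thirds_le_iff by blast
    then show ?thesis using mu_star_2_le[OF n] by simp
  qed
  show ?thesis
    using mu mu_star ceiling_two_thirds ceiling_third Least_even_two_thirds by simp
qed

end
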